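(* Let $\mathcal{X}$ be a finite alphabet with $|\mathcal{X}|=q$, $P_0,P_1$ probability mass functions on $\mathcal{X}$ with the same support $\mathcal{X}$, $\varepsilon>0$, $n>1$, $k^\star\in(1,n]$, and $\mathcal{D}=(x_1,\dots,x_n)$ with independent entries, $x_1,\dots,x_{k^\star-1}\sim P_0$, $x_{k^\star},\dots,x_n\sim P_1$. Let the Offline RR-CPD estimator privatize each $x_i$ by randomized response $W^r$ to $y_i$, set $Q_j(y)=\sum_xP_j(x)W^r(y|x)$, and output $\hat k\in\arg\max_{k\in[n]}\sum_{i=k}^n\log\frac{Q_1(y_i)}{Q_0(y_i)}$. Then for any $\alpha\in[n]$ the estimator is $(\alpha,\beta_r)$-accurate with $$\beta_r\le2\min\Big\{\frac{t_r(1-t_r^M)}{1-t_r};\ \Big(1-\frac{C_r}{2}\Big)^{\alpha/2}\Big\},$$ where $t_r=\exp(-\alpha C_r^2/s_r^2)$, $M=\lfloor\frac{n-1}{\alpha}\rfloor$, $s_r=\min\{2\varepsilon;\tanh(\varepsilon/2)s\}$, $C_r=2\big(\frac{e^\varepsilon-1}{e^\varepsilon+q-1}\big)^2d^2_{\mathrm{TV}}(P_0,P_1)$ and $s=\max_x\log\frac{P_1(x)}{P_0(x)}-\min_x\log\frac{P_1(x)}{P_0(x)}$.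
   Context: Randomized response: $W^r(y|x)=\frac{e^\varepsilon}{e^\varepsilon+q-1}$ if $y=x$ and $\frac{1}{e^\varepsilon+q-1}$ otherwise. $(\alpha,\beta)$-accurate means $\mathbb{P}\{\hat k\notin[k^\star-\alpha,k^\star+\alpha]\}=\beta$. $d_{\mathrm{TV}}(P_0,P_1)=\frac12\sum_x|P_0(x)-P_1(x)|$; $\tanh(\varepsilon/2)=\frac{e^\varepsilon-1}{e^\varepsilon+1}$. *)

theory Defs
  imports "HOL-Probability.Probability"
begin

definition rr_W :: "real \<Rightarrow> 'a::finite \<Rightarrow> 'a \<Rightarrow> real" where
  "rr_W eps y x = (if y = x then exp eps / (exp eps + real CARD('a) - 1)
                    else 1 / (exp eps + real CARD('a) - 1))"

definition rr_pmf :: "real \<Rightarrow> 'a::finite \<Rightarrow> 'a pmf" where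
  "rr_pmf eps x = embed_pmf (\<lambda>y. rr_W eps y x)"

definition rr_Q :: "real \<Rightarrow> 'a::finite pmf \<Rightarrow> 'a \<Rightarrow> real" where
  "rr_Q eps P y = (\<Sum>x\<in>UNIV. pmf P x * rr_W eps y x)"

definition tv_dist :: "'a::finite pmf \<Rightarrow> 'a pmf \<Rightarrow> real" where
  "tv_dist P0 P1 = (1/2) * (\<Sum>x\<in>UNIV. \<bar>pmf P0 x - pmf P1 x\<bar>)"

definition llr_range :: "'a::finite pmf \<Rightarrow> 'a pmf \<Rightarrow> real" where
  "llr_range P0 P1 = Max ((\<lambda>x. ln (pmf P1 x / pmf P0 x)) ` UNIV)
                    - Min ((\<lambda>x. ln (pmf P1 x / pmf P0 x)) ` UNIV)"

definition rr_data :: "real \<Rightarrow> 'a::finite pmf \<Rightarrow> 'a pmf \<Rightarrow> nat \<Rightarrow> nat \<Rightarrow> (nat \<Rightarrow> 'a \<times> 'a) pmf" where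
  "rr_data eps P0 P1 n kstar =
     Pi_pmf {1..n} undefined
       (\<lambda>i. bind_pmf (if i < kstar then P0 else P1)
               (\<lambda>x. map_pmf (\<lambda>y. (x, y)) (rr_pmf eps x)))"

definition rr_stat :: "real \<Rightarrow> 'a::finite pmf \<Rightarrow> 'a pmf \<Rightarrow> nat \<Rightarrow> (nat \<Rightarrow> 'a) \<Rightarrow> nat \<Rightarrow> real" where
  "rr_stat eps P0 P1 n y k = (\<Sum>i=k..n. ln (rr_Q eps P1 (y i) / rr_Q eps P0 (y i)))"

end

theory Submission
  imports Defs
begin

(*
  Write Q0, Q1 for the output laws of randomized response and BC for their Bhattacharyya
  coefficient. If khat overshoots kstar by more than alpha, then for some m >= alpha the
  log-likelihood ratios ln (Q1/Q0) of the m outputs following kstar, which are Q1-distributed,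
  have a nonpositive sum, i.e. a product of m independent factors sqrt (Q0/Q1) reaches 1;
  undershooting gives the symmetric event before kstar with factors sqrt (Q1/Q0) under Q0.
  Every factor has mean BC <= 1, so by Ville's maximal inequality each event has probability
  at most BC^alpha. Moreover BC^2 <= 1 - TV(Q0,Q1)^2, and randomized response scales total
  variation exactly by (e^eps - 1)/(e^eps + q - 1), whence BC^alpha <= (1 - C/2)^(alpha/2).
  This term is always the smaller one: the log-odds ln (p/(1-p)) are 4-Lipschitz, which gives
  4 TV(P0,P1) <= s, and tanh (eps/2) <= eps/2, so 4 C <= s_r^2 and (1 - C/2)^(alpha/2) <= t.
  For alpha = n the geometric term is 0, but then no deviation beyond alpha is possible.
*)

lemma tanh_half_eq: "tanh (x / 2) = (exp x - 1) / (exp x + 1)" for x :: real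
proof -
  have "tanh (x / 2) = (1 - exp (- x)) / (1 + exp (- x))"
    by (simp add: tanh_real_altdef)
  also have "\<dots> = (exp x * (1 - exp (- x))) / (exp x * (1 + exp (- x)))"
    by simp
  also have "\<dots> = (exp x - 1) / (exp x + 1)"
    by (simp add: algebra_simps exp_minus)
  finally show ?thesis .
qed

lemma tanh_le_self:
  fixes x :: real
  assumes "0 \<le> x"
  shows "tanh x \<le> x"
proof -
  have "0 - tanh 0 \<le> x - tanh x"
  proof (rule DERIV_nonneg_imp_increasing_open[OF assms])
    fix u :: real
    have "((\<lambda>v. v - tanh v) has_real_derivative 1 - (1 - (tanh u)\<^sup>2)) (at u)"
      by (intro derivative_eq_intros) auto
    then show "\<exists>D. ((\<lambda>v. v - tanh v) has_real_derivative D) (at u) \<and> 0 \<le> D"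
      by fastforce
  qed (intro continuous_intros; simp)
  then show ?thesis
    by simp
qed

lemma logit_increment_ge:
  fixes a b :: real
  assumes "0 < a" "a \<le> b" "b < 1"
  shows "4 * (b - a) \<le> (ln b - ln (1 - b)) - (ln a - ln (1 - a))"
proof -
  define f where "f x = ln x - ln (1 - x) - 4 * x" for x :: real
  have "f a \<le> f b"
  proof (rule DERIV_nonneg_imp_increasing_open[OF assms(2)])
    fix x assume x: "a < x" "x < b"
    have "DERIV f x :> 1 / x + 1 / (1 - x) - 4"
      unfolding f_def using x assms by (auto intro!: derivative_eq_intros)
    moreover have "1 / x + 1 / (1 - x) - 4 = (1 - 2 * x)\<^sup>2 / (x * (1 - x))"
      using x assms by (simp add: field_simps power2_eq_square)
    moreover have "0 \<le> (1 - 2 * x)\<^sup>2 / (x * (1 - x))"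
      using x assms by simp
    ultimately show "\<exists>D. DERIV f x :> D \<and> 0 \<le> D"
      by auto
  next
    show "continuous_on {a..b} f"
      unfolding f_def using assms by (intro continuous_intros) auto
  qed
  then show ?thesis
    by (simp add: f_def)
qed

lemma power_le_powr_half:
  fixes x y :: real
  assumes "0 < x" "x\<^sup>2 \<le> y"
  shows "x ^ n \<le> y powr (real n / 2)"
proof -
  have "x ^ n = x powr (2 * (real n / 2))"
    using assms(1) by (simp add: powr_realpow)
  also have "\<dots> = (x powr 2) powr (real n / 2)"
    by (rule powr_powr[symmetric])
  also have "\<dots> = (x\<^sup>2) powr (real n / 2)"
    using assms(1) by (simp only: powr_numeral)
  also have "\<dots> \<le> y powr (real n / 2)"
    using assms by (intro powr_mono2) auto
  finally show ?thesis .
qed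

lemma self_le_geometric_sum:
  fixes t :: real
  assumes "0 < t" "t < 1" "1 \<le> M"
  shows "t \<le> t * (1 - t ^ M) / (1 - t)"
proof -
  have "t ^ M \<le> t"
    using power_decreasing[OF assms(3), of t] assms by simp
  then show ?thesis
    using assms by (simp add: field_simps)
qed

lemma powr_le_geometric_sum:
  fixes x r a :: real and M :: nat
  assumes "0 < x" "x < 1" "4 * x \<le> r" "0 < a" "1 \<le> M"
  defines "t \<equiv> exp (- a * (2 * x\<^sup>2)\<^sup>2 / r\<^sup>2)"
  shows "(1 - x\<^sup>2) powr (a / 2) \<le> t * (1 - t ^ M) / (1 - t)"
proof -
  have "(2 * x\<^sup>2)\<^sup>2 / r\<^sup>2 \<le> (2 * x\<^sup>2)\<^sup>2 / (4 * x)\<^sup>2"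
    using assms by (intro divide_left_mono power_mono mult_pos_pos) auto
  also have "\<dots> = x\<^sup>2 / 4"
    using assms by (simp add: field_simps power2_eq_square)
  also have "\<dots> \<le> x\<^sup>2 / 2"
    by simp
  finally have ratio: "(2 * x\<^sup>2)\<^sup>2 / r\<^sup>2 \<le> x\<^sup>2 / 2" .
  have "0 < 1 - x\<^sup>2"
    using assms by (simp add: power_less_one_iff abs_square_less_1)
  then have "(1 - x\<^sup>2) powr (a / 2) = exp (a / 2 * ln (1 - x\<^sup>2))"
    by (simp add: powr_def)
  also have "\<dots> \<le> exp (a / 2 * - x\<^sup>2)"
    using mult_left_mono[OF ln_le_minus_one[OF \<open>0 < 1 - x\<^sup>2\<close>], of "a / 2"] assms by simp
  also have "\<dots> \<le> t"
    unfolding t_def using mult_left_mono[OF ratio, of a] assms by simp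
  also have "t \<le> t * (1 - t ^ M) / (1 - t)"
    using assms by (intro self_le_geometric_sum) (auto simp: t_def)
  finally show ?thesis .
qed

lemma exp_half_ln: "0 < x \<Longrightarrow> exp (ln x / 2) = sqrt x"
  by (simp add: ln_sqrt[symmetric])

lemma prod_list_exp_half: "(\<Prod>x\<leftarrow>xs. exp (f x / 2)) = exp ((\<Sum>x\<leftarrow>xs. f x) / 2)"
  for f :: "'a \<Rightarrow> real"
  by (induction xs) (simp_all add: exp_add add_divide_distrib)

section \<open>Bhattacharyya coefficient and total variation\<close>

definition bhattacharyya :: "'a::finite pmf \<Rightarrow> 'a pmf \<Rightarrow> real" where
  "bhattacharyya P Q = (\<Sum>x\<in>UNIV. sqrt (pmf P x * pmf Q x))"

lemma bhattacharyya_nonneg: "0 \<le> bhattacharyya P Q"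
  unfolding bhattacharyya_def by (intro sum_nonneg) simp

lemma bhattacharyya_pos:
  assumes "\<And>x. 0 < pmf P x" "\<And>x. 0 < pmf Q x"
  shows "0 < bhattacharyya P Q"
  unfolding bhattacharyya_def using assms by (intro sum_pos) auto

lemma bhattacharyya_sq_le: "(bhattacharyya P Q)\<^sup>2 \<le> 1 - (tv_dist P Q)\<^sup>2"
proof -
  define B where "B = bhattacharyya P Q"
  define u v where "u x = sqrt (pmf P x)" and "v x = sqrt (pmf Q x)" for x
  have uv: "(u x)\<^sup>2 = pmf P x" "(v x)\<^sup>2 = pmf Q x" "u x * v x = sqrt (pmf P x * pmf Q x)" for x
    by (simp_all add: u_def v_def real_sqrt_mult)
  have sums: "(\<Sum>x\<in>UNIV. (u x)\<^sup>2) = 1" "(\<Sum>x\<in>UNIV. (v x)\<^sup>2) = 1" "(\<Sum>x\<in>UNIV. u x * v x) = B"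
    by (simp_all add: uv sum_pmf_eq_1 B_def bhattacharyya_def)
  have "\<bar>pmf P x - pmf Q x\<bar> = \<bar>u x - v x\<bar> * (u x + v x)" for x
  proof -
    have "pmf P x - pmf Q x = (u x - v x) * (u x + v x)"
      by (simp only: uv(1,2)[symmetric]) (simp add: power2_eq_square algebra_simps)
    moreover have "0 \<le> u x + v x"
      by (simp add: u_def v_def)
    ultimately show ?thesis
      by (simp add: abs_mult)
  qed
  then have "(\<Sum>x\<in>UNIV. \<bar>pmf P x - pmf Q x\<bar>)\<^sup>2
               \<le> (\<Sum>x\<in>UNIV. \<bar>u x - v x\<bar>\<^sup>2) * (\<Sum>x\<in>UNIV. (u x + v x)\<^sup>2)"
    by (simp only: Cauchy_Schwarz_ineq_sum)
  also have "\<dots> = (2 - 2 * B) * (2 + 2 * B)"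
    by (simp add: power2_diff power2_sum sum.distrib sum_subtractf sum_distrib_left[symmetric]
        sums mult.assoc)
  finally show ?thesis
    by (simp add: B_def tv_dist_def power_mult_distrib algebra_simps power2_eq_square)
qed

lemma bhattacharyya_le_1: "bhattacharyya P Q \<le> 1"
proof -
  have "(bhattacharyya P Q)\<^sup>2 \<le> 1"
    using bhattacharyya_sq_le[of P Q] zero_le_power2[of "tv_dist P Q"] by linarith
  then show ?thesis
    by (metis one_power2 power2_le_imp_le zero_le_one)
qed

lemma bhattacharyya_eq_sum_exp_half_llr:
  assumes "\<And>x. 0 < pmf P x" "\<And>x. 0 < pmf Q x"
  shows "(\<Sum>x\<in>UNIV. pmf Q x * exp (- ln (pmf Q x / pmf P x) / 2)) = bhattacharyya P Q"
    and "(\<Sum>x\<in>UNIV. pmf P x * exp (ln (pmf Q x / pmf P x) / 2)) = bhattacharyya P Q"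
proof -
  have "pmf Q x * exp (- ln (pmf Q x / pmf P x) / 2) = sqrt (pmf P x * pmf Q x)" for x
  proof -
    have "- ln (pmf Q x / pmf P x) = ln (pmf P x / pmf Q x)"
      using assms by (simp add: ln_div)
    then show ?thesis
      using assms[of x] by (simp add: exp_half_ln real_sqrt_divide real_sqrt_mult field_simps)
  qed
  then show "(\<Sum>x\<in>UNIV. pmf Q x * exp (- ln (pmf Q x / pmf P x) / 2)) = bhattacharyya P Q"
    by (simp add: bhattacharyya_def)
  have "pmf P x * exp (ln (pmf Q x / pmf P x) / 2) = sqrt (pmf P x * pmf Q x)" for x
    using assms[of x] by (simp add: exp_half_ln real_sqrt_divide real_sqrt_mult field_simps)
  then show "(\<Sum>x\<in>UNIV. pmf P x * exp (ln (pmf Q x / pmf P x) / 2)) = bhattacharyya P Q"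
    by (simp add: bhattacharyya_def)
qed

lemma tv_dist_eq_sum_less:
  "tv_dist P0 P1 = (\<Sum>x | pmf P0 x < pmf P1 x. pmf P1 x - pmf P0 x)"
proof -
  have "\<bar>pmf P0 x - pmf P1 x\<bar>
          = 2 * (if pmf P0 x < pmf P1 x then pmf P1 x - pmf P0 x else 0) - (pmf P1 x - pmf P0 x)" for x
    by auto
  moreover have "(\<Sum>x\<in>UNIV. pmf P1 x - pmf P0 x) = 0"
    by (simp add: sum_subtractf sum_pmf_eq_1)
  ultimately show ?thesis
    by (simp add: tv_dist_def sum_subtractf sum_distrib_left[symmetric] sum.If_cases)
qed

lemma tv_dist_le_1: "tv_dist P0 P1 \<le> 1"
proof -
  have "tv_dist P0 P1 \<le> (\<Sum>x | pmf P0 x < pmf P1 x. pmf P1 x)"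
    unfolding tv_dist_eq_sum_less by (intro sum_mono) simp
  also have "\<dots> \<le> (\<Sum>x\<in>UNIV. pmf P1 x)"
    by (intro sum_mono2) auto
  finally show ?thesis
    by (simp add: sum_pmf_eq_1)
qed

lemma tv_dist_pos: "P0 \<noteq> P1 \<Longrightarrow> 0 < tv_dist P0 P1"
proof (rule ccontr)
  assume "P0 \<noteq> P1" "\<not> 0 < tv_dist P0 P1"
  then have "(\<Sum>x\<in>UNIV. \<bar>pmf P0 x - pmf P1 x\<bar>) = 0"
    by (simp add: tv_dist_def order.antisym sum_nonneg)
  then have "pmf P0 x = pmf P1 x" for x
    by (simp add: sum_nonneg_eq_0_iff)
  then show False
    using \<open>P0 \<noteq> P1\<close> pmf_eqI by blast
qed

lemma two_le_card_if_pmf_neq: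
  fixes P0 P1 :: "'a::finite pmf"
  assumes "P0 \<noteq> P1"
  shows "2 \<le> CARD('a)"
proof (rule ccontr)
  assume "\<not> 2 \<le> CARD('a)"
  then have "CARD('a) = 1"
    by (simp add: Suc_leI le_antisym)
  then obtain x0 :: 'a where "UNIV = {x0}"
    by (metis card_1_singletonE)
  have "pmf P x0 = 1" for P :: "'a pmf"
  proof -
    have "(\<Sum>x\<in>{x0}. pmf P x) = 1"
      by (rule sum_pmf_eq_1) (use \<open>UNIV = {x0}\<close> in auto)
    then show ?thesis
      by simp
  qed
  then have "P0 = P1"
    using \<open>UNIV = {x0}\<close> by (intro pmf_eqI) (metis UNIV_I singletonD)
  then show False
    using assms by simp
qed

lemma sum_pmf_llr_bounds:
  fixes P0 P1 :: "'a::finite pmf"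
  assumes "set_pmf P0 = UNIV" "set_pmf P1 = UNIV"
  defines "llr \<equiv> \<lambda>x. ln (pmf P1 x / pmf P0 x)"
  shows "exp (Min (range llr)) * (\<Sum>x\<in>S. pmf P0 x) \<le> (\<Sum>x\<in>S. pmf P1 x)"
    and "(\<Sum>x\<in>S. pmf P1 x) \<le> exp (Max (range llr)) * (\<Sum>x\<in>S. pmf P0 x)"
proof -
  have pos: "0 < pmf P0 x" "0 < pmf P1 x" for x
    using assms(1,2) by (simp_all add: pmf_positive)
  have "pmf P1 x = exp (llr x) * pmf P0 x" for x
    using pos[of x] by (simp add: llr_def)
  moreover have "Min (range llr) \<le> llr x" "llr x \<le> Max (range llr)" for x
    by simp_all
  ultimately have "exp (Min (range llr)) * pmf P0 x \<le> pmf P1 x"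
    and "pmf P1 x \<le> exp (Max (range llr)) * pmf P0 x" for x
    by (simp_all add: mult_right_mono)
  then show "exp (Min (range llr)) * (\<Sum>x\<in>S. pmf P0 x) \<le> (\<Sum>x\<in>S. pmf P1 x)"
    and "(\<Sum>x\<in>S. pmf P1 x) \<le> exp (Max (range llr)) * (\<Sum>x\<in>S. pmf P0 x)"
    by (simp_all add: sum_distrib_left sum_mono)
qed

lemma four_tv_dist_le_llr_range:
  fixes P0 P1 :: "'a::finite pmf"
  assumes "set_pmf P0 = UNIV" "set_pmf P1 = UNIV"
  shows "4 * tv_dist P0 P1 \<le> llr_range P0 P1"
proof -
  define U where "U = Max (range (\<lambda>x. ln (pmf P1 x / pmf P0 x)))"
  define L where "L = Min (range (\<lambda>x. ln (pmf P1 x / pmf P0 x)))"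
  define S where "S = {x. pmf P0 x < pmf P1 x}"
  define a where "a = (\<Sum>x\<in>S. pmf P0 x)"
  define b where "b = (\<Sum>x\<in>S. pmf P1 x)"
  have compl: "(\<Sum>x\<in>-S. pmf P x) = 1 - (\<Sum>x\<in>S. pmf P x)" for P :: "'a pmf"
    using sum.Int_Diff[of UNIV "pmf P" S] by (simp add: Compl_eq_Diff_UNIV sum_pmf_eq_1)
  have range: "llr_range P0 P1 = U - L"
    by (simp add: llr_range_def U_def L_def)
  have tv: "tv_dist P0 P1 = b - a"
    by (simp add: tv_dist_eq_sum_less S_def a_def b_def sum_subtractf)
  show ?thesis
  proof (cases "S = {}")
    case True
    have "L \<le> U"
      unfolding L_def U_def by (rule order_trans[OF Min_le Max_ge]) auto
    then show ?thesis
      using True by (simp add: range tv a_def b_def)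
  next
    case False
    have "0 < a"
      unfolding a_def using False assms(1) by (intro sum_pos) (auto simp: pmf_positive)
    have "a < b"
      unfolding a_def b_def using False by (intro sum_strict_mono) (auto simp: S_def)
    have "S \<noteq> UNIV"
      using \<open>a < b\<close> by (auto simp: a_def b_def sum_pmf_eq_1)
    then obtain x where "x \<in> - S"
      by auto
    then have "0 < (\<Sum>x\<in>-S. pmf P1 x)"
      using assms(2) by (intro sum_pos2) (auto simp: pmf_positive)
    then have "b < 1"
      using compl[of P1] by (simp add: b_def)
    have "ln b \<le> ln (exp U * a)"
      using sum_pmf_llr_bounds(2)[OF assms, of S] \<open>0 < a\<close> \<open>a < b\<close> by (simp add: U_def a_def b_def)
    then have upper: "ln b - ln a \<le> U"
      using \<open>0 < a\<close> by (simp add: ln_mult)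
    have "ln (exp L * (1 - a)) \<le> ln (1 - b)"
      using sum_pmf_llr_bounds(1)[OF assms, of "-S"] \<open>a < b\<close> \<open>b < 1\<close>
      by (simp add: L_def a_def b_def compl)
    then have lower: "ln (1 - a) - ln (1 - b) \<le> - L"
      using \<open>a < b\<close> \<open>b < 1\<close> by (simp add: ln_mult)
    have "4 * (b - a) \<le> (ln b - ln (1 - b)) - (ln a - ln (1 - a))"
      using \<open>0 < a\<close> \<open>a < b\<close> \<open>b < 1\<close> by (intro logit_increment_ge) auto
    then show ?thesis
      using upper lower by (simp add: range tv)
  qed
qed

section \<open>Randomized response\<close>

lemma rr_denominator_pos: "0 < exp eps + real CARD('a::finite) - 1"
proof -
  have "1 \<le> real CARD('a)"
    by (simp add: Suc_leI)
  then show ?thesis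
    using exp_gt_zero[of eps] by linarith
qed

lemma rr_W_pos: "0 < rr_W eps y x"
  using rr_denominator_pos[where eps=eps and 'a='a] by (simp add: rr_W_def)

lemma sum_rr_W: "(\<Sum>y\<in>UNIV. rr_W eps y (x::'a::finite)) = 1"
proof -
  have "(\<Sum>y\<in>UNIV. rr_W eps y x) = rr_W eps x x + (\<Sum>y\<in>UNIV - {x}. rr_W eps y x)"
    by (simp add: sum.remove)
  also have "\<dots> = (exp eps + (real CARD('a) - 1)) / (exp eps + real CARD('a) - 1)"
    by (simp add: rr_W_def card_Diff_singleton of_nat_diff Suc_leI add_divide_distrib)
  also have "\<dots> = 1"
    using rr_denominator_pos[where eps=eps and 'a='a] by simp
  finally show ?thesis .
qed

lemma pmf_rr_pmf: "pmf (rr_pmf eps x) y = rr_W eps y x"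
  unfolding rr_pmf_def
proof (rule pmf_embed_pmf)
  show "0 \<le> rr_W eps y x" for y
    using rr_W_pos less_imp_le by blast
  have "(\<Sum>y\<in>UNIV. ennreal (rr_W eps y x)) = ennreal (\<Sum>y\<in>UNIV. rr_W eps y x)"
    by (rule sum_ennreal) (simp add: less_imp_le[OF rr_W_pos])
  then show "(\<integral>\<^sup>+ y. ennreal (rr_W eps y x) \<partial>count_space UNIV) = 1"
    by (simp add: nn_integral_count_space_finite sum_rr_W)
qed

lemma pmf_bind_rr_pmf: "pmf (bind_pmf P (rr_pmf eps)) y = rr_Q eps P y"
  by (simp add: pmf_bind rr_Q_def pmf_rr_pmf integral_measure_pmf_real[where A=UNIV] mult.commute)

lemma rr_Q_pos: "0 < rr_Q eps P y"
proof -
  obtain x where x: "x \<in> set_pmf P"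
    using set_pmf_not_empty by fast
  have "0 < pmf P x * rr_W eps y x"
    by (intro mult_pos_pos pmf_positive x rr_W_pos)
  also have "\<dots> \<le> rr_Q eps P y"
    unfolding rr_Q_def by (rule member_le_sum) (auto intro!: mult_nonneg_nonneg less_imp_le[OF rr_W_pos])
  finally show ?thesis .
qed

lemma rr_Q_eq:
  "rr_Q eps P y = (1 + (exp eps - 1) * pmf P y) / (exp eps + real CARD('a) - 1)"
  for P :: "'a::finite pmf"
proof -
  define D where "D = exp eps + real CARD('a) - 1"
  have W: "rr_W eps y x = 1 / D + (if x = y then (exp eps - 1) / D else 0)" for x
    by (auto simp: rr_W_def D_def diff_divide_distrib)
  have "rr_Q eps P y
          = (\<Sum>x\<in>UNIV. pmf P x / D + (if x = y then pmf P x * ((exp eps - 1) / D) else 0))"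
    unfolding rr_Q_def W by (intro sum.cong) (auto simp: algebra_simps)
  also have "\<dots> = 1 / D + pmf P y * ((exp eps - 1) / D)"
    by (simp add: sum.distrib sum_divide_distrib[symmetric] sum_pmf_eq_1)
  finally show ?thesis
    by (simp add: D_def add_divide_distrib)
qed

lemma tv_dist_rr:
  fixes P0 P1 :: "'a::finite pmf"
  assumes "0 \<le> eps"
  shows "tv_dist (bind_pmf P0 (rr_pmf eps)) (bind_pmf P1 (rr_pmf eps))
           = (exp eps - 1) / (exp eps + real CARD('a) - 1) * tv_dist P0 P1"
proof -
  define \<kappa> where "\<kappa> = (exp eps - 1) / (exp eps + real CARD('a) - 1)"
  have "0 \<le> \<kappa>"
    using assms rr_denominator_pos[where eps=eps and 'a='a] by (simp add: \<kappa>_def)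
  have "rr_Q eps P0 y - rr_Q eps P1 y = \<kappa> * (pmf P0 y - pmf P1 y)" for y
    by (simp add: rr_Q_eq \<kappa>_def diff_divide_distrib[symmetric] algebra_simps)
  then have "tv_dist (bind_pmf P0 (rr_pmf eps)) (bind_pmf P1 (rr_pmf eps))
               = (1 / 2) * (\<Sum>y\<in>UNIV. \<bar>\<kappa> * (pmf P0 y - pmf P1 y)\<bar>)"
    by (simp add: tv_dist_def pmf_bind_rr_pmf)
  also have "\<dots> = \<kappa> * tv_dist P0 P1"
    using \<open>0 \<le> \<kappa>\<close> by (simp add: tv_dist_def abs_mult sum_distrib_left[symmetric])
  finally show ?thesis
    by (simp only: \<kappa>_def)
qed

lemma rr_gain_le_tanh:
  assumes "0 \<le> eps" "2 \<le> CARD('a::finite)"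
  shows "(exp eps - 1) / (exp eps + real CARD('a) - 1) \<le> tanh (eps / 2)"
proof -
  have "(exp eps - 1) / (exp eps + real CARD('a) - 1) \<le> (exp eps - 1) / (exp eps + 1)"
    using assms rr_denominator_pos[where eps=eps and 'a='a]
    by (intro divide_left_mono) (auto intro!: mult_pos_pos add_pos_pos)
  then show ?thesis
    by (simp add: tanh_half_eq)
qed

lemma rr_gain_tv_dist_bounds:
  fixes P0 P1 :: "'a::finite pmf"
  assumes "0 < eps" "P0 \<noteq> P1"
  shows "0 < (exp eps - 1) / (exp eps + real CARD('a) - 1) * tv_dist P0 P1"
    and "(exp eps - 1) / (exp eps + real CARD('a) - 1) * tv_dist P0 P1 < 1"
proof -
  define \<kappa> where "\<kappa> = (exp eps - 1) / (exp eps + real CARD('a) - 1)"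
  have "0 < \<kappa>" "\<kappa> < 1"
    using assms(1) rr_denominator_pos[where eps=eps and 'a='a] by (simp_all add: \<kappa>_def card_gt_0_iff)
  moreover have "0 < tv_dist P0 P1" "tv_dist P0 P1 \<le> 1"
    using assms(2) by (simp_all add: tv_dist_pos tv_dist_le_1)
  ultimately have "0 < \<kappa> * tv_dist P0 P1" "\<kappa> * tv_dist P0 P1 < 1"
    by (simp_all add: mult_le_one mult_left_le le_less_trans[of _ \<kappa>])
  then show "0 < (exp eps - 1) / (exp eps + real CARD('a) - 1) * tv_dist P0 P1"
    and "(exp eps - 1) / (exp eps + real CARD('a) - 1) * tv_dist P0 P1 < 1"
    by (simp_all only: \<kappa>_def)
qed

lemma rr_bhattacharyya_pow_le:
  fixes P0 P1 :: "'a::finite pmf"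
  assumes "0 \<le> eps"
  shows "bhattacharyya (bind_pmf P0 (rr_pmf eps)) (bind_pmf P1 (rr_pmf eps)) ^ k
           \<le> (1 - ((exp eps - 1) / (exp eps + real CARD('a) - 1) * tv_dist P0 P1)\<^sup>2) powr (real k / 2)"
proof -
  have "bhattacharyya (bind_pmf P0 (rr_pmf eps)) (bind_pmf P1 (rr_pmf eps)) ^ k
          \<le> (1 - (tv_dist (bind_pmf P0 (rr_pmf eps)) (bind_pmf P1 (rr_pmf eps)))\<^sup>2) powr (real k / 2)"
    by (intro power_le_powr_half bhattacharyya_pos bhattacharyya_sq_le)
       (simp_all add: pmf_bind_rr_pmf rr_Q_pos)
  then show ?thesis
    by (simp add: tv_dist_rr[OF assms])
qed

lemma four_rr_tv_dist_le:
  fixes P0 P1 :: "'a::finite pmf"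
  assumes "set_pmf P0 = UNIV" "set_pmf P1 = UNIV" "P0 \<noteq> P1" "0 \<le> eps"
  shows "4 * ((exp eps - 1) / (exp eps + real CARD('a) - 1) * tv_dist P0 P1)
           \<le> min (2 * eps) (tanh (eps / 2) * llr_range P0 P1)"
proof -
  define \<kappa> where "\<kappa> = (exp eps - 1) / (exp eps + real CARD('a) - 1)"
  define d where "d = tv_dist P0 P1"
  have "0 \<le> \<kappa>"
    using assms(4) rr_denominator_pos[where eps=eps and 'a='a] by (simp add: \<kappa>_def)
  have "\<kappa> \<le> tanh (eps / 2)"
    unfolding \<kappa>_def using assms(4) two_le_card_if_pmf_neq[OF assms(3)] by (rule rr_gain_le_tanh)
  have "0 < d"
    unfolding d_def using assms(3) by (rule tv_dist_pos)
  have "d \<le> 1"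
    unfolding d_def by (rule tv_dist_le_1)
  have "\<kappa> * d \<le> \<kappa>"
    using \<open>0 \<le> \<kappa>\<close> \<open>d \<le> 1\<close> by (simp add: mult_left_le)
  also have "\<dots> \<le> eps / 2"
    using \<open>\<kappa> \<le> tanh (eps / 2)\<close> tanh_le_self[of "eps / 2"] assms(4) by simp
  finally have "\<kappa> * d \<le> eps / 2" .
  moreover have "\<kappa> * (4 * d) \<le> tanh (eps / 2) * llr_range P0 P1"
    using \<open>\<kappa> \<le> tanh (eps / 2)\<close> four_tv_dist_le_llr_range[OF assms(1,2)] \<open>0 \<le> \<kappa>\<close> \<open>0 < d\<close> assms(4)
    by (intro mult_mono) (simp_all add: d_def)
  ultimately have "4 * (\<kappa> * d) \<le> min (2 * eps) (tanh (eps / 2) * llr_range P0 P1)"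
    by (simp add: mult.left_commute)
  then show ?thesis
    by (simp only: \<kappa>_def d_def)
qed

section \<open>Ville's inequality for products of independent factors\<close>

lemma prob_bind_pmf:
  "measure_pmf.prob (bind_pmf M N) X = measure_pmf.expectation M (\<lambda>x. measure_pmf.prob (N x) X)"
proof -
  have "emeasure (measure_pmf (bind_pmf M N)) X = (\<integral>\<^sup>+x. emeasure (N x) X \<partial>M)"
    by simp
  also have "\<dots> = (\<integral>\<^sup>+x. ennreal (measure_pmf.prob (N x) X) \<partial>M)"
    by (simp add: measure_pmf.emeasure_eq_measure)
  also have "\<dots> = ennreal (measure_pmf.expectation M (\<lambda>x. measure_pmf.prob (N x) X))"
    by (rule nn_integral_eq_integral) (auto intro!: measure_pmf.integrable_const_bound[where B=1])
  finally show ?thesis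
    by (simp add: measure_pmf.emeasure_eq_measure)
qed

lemma prob_Pi_pmf_insert:
  fixes p :: "'i \<Rightarrow> 'b::finite pmf"
  assumes "finite A" "i \<notin> A"
  shows "measure_pmf.prob (Pi_pmf (insert i A) d p) E
           = (\<Sum>z\<in>UNIV. pmf (p i) z * measure_pmf.prob (Pi_pmf A d p) {f. f(i := z) \<in> E})"
proof -
  have "Pi_pmf (insert i A) d p = bind_pmf (p i) (\<lambda>z. map_pmf (\<lambda>f. f(i := z)) (Pi_pmf A d p))"
    using assms by (simp add: Pi_pmf_insert' map_pmf_def)
  then show ?thesis
    by (simp add: prob_bind_pmf integral_measure_pmf_real[where A=UNIV] vimage_def mult.commute)
qed

definition prefix_prod_event :: "('b \<Rightarrow> real) \<Rightarrow> 'i list \<Rightarrow> nat \<Rightarrow> real \<Rightarrow> ('i \<Rightarrow> 'b) set" where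
  "prefix_prod_event Z is a c = {f. \<exists>m. a \<le> m \<and> m \<le> length is \<and> 1 \<le> c * (\<Prod>i\<leftarrow>take m is. Z (f i))}"

lemma prefix_prod_event_Cons_subset:
  assumes "i \<notin> set is" "\<not> (a = 0 \<and> 1 \<le> c)"
  shows "{f. f(i := z) \<in> prefix_prod_event Z (i # is) a c} \<subseteq> prefix_prod_event Z is (a - 1) (c * Z z)"
proof
  fix f assume "f \<in> {f. f(i := z) \<in> prefix_prod_event Z (i # is) a c}"
  then obtain m where m: "a \<le> m" "m \<le> Suc (length is)"
    and prod: "1 \<le> c * (\<Prod>j\<leftarrow>take m (i # is). Z ((f(i := z)) j))"
    by (auto simp: prefix_prod_event_def)
  obtain m' where "m = Suc m'"
    using m prod assms(2) by (cases m) auto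
  moreover have "(\<Prod>j\<leftarrow>take m' is. Z ((f(i := z)) j)) = (\<Prod>j\<leftarrow>take m' is. Z (f j))"
    using assms(1) by (intro arg_cong[where f=prod_list] map_cong) (auto dest: in_set_takeD)
  ultimately have "1 \<le> (c * Z z) * (\<Prod>j\<leftarrow>take m' is. Z (f j))"
    using prod by (simp add: mult.assoc fun_upd_same del: fun_upd_apply)
  then show "f \<in> prefix_prod_event Z is (a - 1) (c * Z z)"
    using m \<open>m = Suc m'\<close> by (auto simp: prefix_prod_event_def intro!: exI[of _ m'])
qed

lemma ville_Pi_pmf:
  fixes p :: "'i \<Rightarrow> 'b::finite pmf" and Z :: "'b \<Rightarrow> real" and "is" :: "'i list"
  assumes Z_nonneg: "\<And>z. 0 \<le> Z z" and \<rho>: "0 \<le> \<rho>" "\<rho> \<le> 1"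
    and mean_Z: "\<And>i. i \<in> set is \<Longrightarrow> (\<Sum>z\<in>UNIV. pmf (p i) z * Z z) \<le> \<rho>"
    and "finite A" "set is \<subseteq> A" "distinct is" "0 \<le> c"
  shows "measure_pmf.prob (Pi_pmf A d p) (prefix_prod_event Z is a c) \<le> c * \<rho> ^ a"
  using assms(4-)
proof (induction "is" arbitrary: A a c)
  case Nil
  then show ?case
    using \<rho> measure_pmf.prob_le_1 by (cases "a = 0 \<and> 1 \<le> c") (auto simp: prefix_prod_event_def)
next
  case (Cons i "is")
  show ?case
  proof (cases "a = 0 \<and> 1 \<le> c")
    case True
    then show ?thesis
      by (metis measure_pmf.prob_le_1 order_trans power_0 mult_1_right)
  next
    case False
    define A' where "A' = A - {i}"
    have A': "A = insert i A'" "i \<notin> A'" "finite A'" "set is \<subseteq> A'"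
      using Cons.prems by (auto simp: A'_def)
    have "measure_pmf.prob (Pi_pmf A' d p) {f. f(i := z) \<in> prefix_prod_event Z (i # is) a c}
            \<le> measure_pmf.prob (Pi_pmf A' d p) (prefix_prod_event Z is (a - 1) (c * Z z))" for z
      using Cons.prems False by (intro measure_pmf.finite_measure_mono prefix_prod_event_Cons_subset) auto
    also have "\<dots> z \<le> c * Z z * \<rho> ^ (a - 1)" for z
      using Cons A' Z_nonneg[of z] by (intro Cons.IH) auto
    finally have "measure_pmf.prob (Pi_pmf A d p) (prefix_prod_event Z (i # is) a c)
                    \<le> (\<Sum>z\<in>UNIV. pmf (p i) z * (c * Z z * \<rho> ^ (a - 1)))"
      unfolding A' using A' by (simp add: prob_Pi_pmf_insert sum_mono mult_left_mono)
    also have "\<dots> = c * \<rho> ^ (a - 1) * (\<Sum>z\<in>UNIV. pmf (p i) z * Z z)"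
      by (simp add: sum_distrib_left mult_ac)
    also have "\<dots> \<le> c * \<rho> ^ (a - 1) * \<rho>"
      using mean_Z[of i] Cons.prems \<rho> by (intro mult_left_mono) auto
    also have "\<dots> \<le> c * \<rho> ^ a"
      using \<rho> Cons.prems by (cases a) (auto simp: mult_ac mult_left_le_one_le)
    finally show ?thesis .
  qed
qed

section \<open>Deviation of the CUSUM estimator\<close>

lemma rr_data_outputs:
  fixes P0 P1 :: "'a::finite pmf"
  shows "map_pmf (\<lambda>\<omega>. snd \<circ> \<omega>) (rr_data eps P0 P1 n kstar)
           = Pi_pmf {1..n} (snd (undefined :: 'a \<times> 'a))
               (\<lambda>i. if i < kstar then bind_pmf P0 (rr_pmf eps) else bind_pmf P1 (rr_pmf eps))"
proof -
  have "map_pmf (\<lambda>\<omega>. snd \<circ> \<omega>) (rr_data eps P0 P1 n kstar)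
          = Pi_pmf {1..n} (snd (undefined :: 'a \<times> 'a))
              (\<lambda>i. map_pmf snd (bind_pmf (if i < kstar then P0 else P1)
                                   (\<lambda>x. map_pmf (\<lambda>y. (x, y)) (rr_pmf eps x))))"
    unfolding rr_data_def by (rule Pi_pmf_map[symmetric]) auto
  also have "\<dots> = Pi_pmf {1..n} (snd (undefined :: 'a \<times> 'a))
               (\<lambda>i. if i < kstar then bind_pmf P0 (rr_pmf eps) else bind_pmf P1 (rr_pmf eps))"
    by (rule Pi_pmf_cong) (auto simp: map_bind_pmf pmf.map_comp o_def)
  finally show ?thesis .
qed

lemma suffix_sum_argmax_cases:
  fixes g :: "nat \<Rightarrow> real"
  assumes max: "(\<Sum>i=kstar..n. g i) \<le> (\<Sum>i=K..n. g i)"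
    and K: "K \<in> {1..n}" and kstar: "kstar \<in> {1..n}"
    and dev: "int \<alpha> < \<bar>int K - int kstar\<bar>"
  shows "(\<exists>m. \<alpha> \<le> m \<and> m \<le> length [kstar..<Suc n] \<and> 0 \<le> (\<Sum>i\<leftarrow>take m [kstar..<Suc n]. - g i))
       \<or> (\<exists>m. \<alpha> \<le> m \<and> m \<le> length (rev [1..<kstar]) \<and> 0 \<le> (\<Sum>i\<leftarrow>take m (rev [1..<kstar]). g i))"
proof -
  have split: "(\<Sum>i=l..n. g i) = (\<Sum>i=l..<u. g i) + (\<Sum>i=u..n. g i)" if "l \<le> u" "u \<le> Suc n" for l u
    using sum.atLeastLessThan_concat[of l u "Suc n" g] that
    by (simp add: atLeastLessThanSuc_atLeastAtMost)
  have list_sum: "(\<Sum>i\<leftarrow>[l..<u]. h i) = (\<Sum>i=l..<u. h i)" for h :: "nat \<Rightarrow> real" and l u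
    by (simp add: interv_sum_list_conv_sum_set_nat)
  from dev consider "kstar + \<alpha> < K" | "K + \<alpha> < kstar"
    by linarith
  then show ?thesis
  proof cases
    case 1
    have "take (K - kstar) [kstar..<Suc n] = [kstar..<K]"
      using 1 K by simp
    moreover have "(\<Sum>i=kstar..<K. g i) \<le> 0"
      using max split[of kstar K] 1 K by simp
    ultimately have "0 \<le> (\<Sum>i\<leftarrow>take (K - kstar) [kstar..<Suc n]. - g i)"
      by (simp add: list_sum sum_negf)
    then show ?thesis
      using 1 K by (intro disjI1 exI[of _ "K - kstar"]) auto
  next
    case 2
    have "take (kstar - K) (rev [1..<kstar]) = rev [K..<kstar]"
      using 2 K by (simp add: take_rev)
    moreover have "0 \<le> (\<Sum>i=K..<kstar. g i)"
      using max split[of K kstar] 2 kstar by simp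
    ultimately have "0 \<le> (\<Sum>i\<leftarrow>take (kstar - K) (rev [1..<kstar]). g i)"
      by (simp add: list_sum rev_map[symmetric] sum_list_rev)
    then show ?thesis
      using 2 K by (intro disjI2 exI[of _ "kstar - K"]) auto
  qed
qed

lemma cusum_deviation_subset:
  fixes h :: "'a \<Rightarrow> real" and khat :: "(nat \<Rightarrow> 'a) \<Rightarrow> nat"
  assumes kstar: "1 \<le> kstar" "kstar \<le> n"
    and khat_argmax: "\<And>y. khat y \<in> {1..n} \<and>
        (\<forall>k\<in>{1..n}. (\<Sum>i=k..n. h (y i)) \<le> (\<Sum>i=khat y..n. h (y i)))"
  shows "{y. int \<alpha> < \<bar>int (khat y) - int kstar\<bar>}
           \<subseteq> prefix_prod_event (\<lambda>z. exp (- h z / 2)) [kstar..<Suc n] \<alpha> 1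
             \<union> prefix_prod_event (\<lambda>z. exp (h z / 2)) (rev [1..<kstar]) \<alpha> 1"
proof
  fix y assume "y \<in> {y. int \<alpha> < \<bar>int (khat y) - int kstar\<bar>}"
  then have dev: "int \<alpha> < \<bar>int (khat y) - int kstar\<bar>"
    by simp
  have "(\<Sum>i=kstar..n. h (y i)) \<le> (\<Sum>i=khat y..n. h (y i))"
    using khat_argmax[of y] kstar by auto
  then have "(\<exists>m. \<alpha> \<le> m \<and> m \<le> length [kstar..<Suc n] \<and> 0 \<le> (\<Sum>i\<leftarrow>take m [kstar..<Suc n]. - h (y i)))
           \<or> (\<exists>m. \<alpha> \<le> m \<and> m \<le> length (rev [1..<kstar]) \<and> 0 \<le> (\<Sum>i\<leftarrow>take m (rev [1..<kstar]). h (y i)))"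
    using suffix_sum_argmax_cases[OF _ _ _ dev] khat_argmax[of y] kstar by simp
  then show "y \<in> prefix_prod_event (\<lambda>z. exp (- h z / 2)) [kstar..<Suc n] \<alpha> 1
                 \<union> prefix_prod_event (\<lambda>z. exp (h z / 2)) (rev [1..<kstar]) \<alpha> 1"
    unfolding prefix_prod_event_def prod_list_exp_half by simp
qed

lemma rr_cusum_deviation_prob_le:
  fixes P0 P1 :: "'a::finite pmf" and khat :: "(nat \<Rightarrow> 'a) \<Rightarrow> nat"
  assumes kstar: "1 \<le> kstar" "kstar \<le> n"
    and khat_argmax: "\<And>y. khat y \<in> {1..n} \<and>
        (\<forall>k\<in>{1..n}. rr_stat eps P0 P1 n y k \<le> rr_stat eps P0 P1 n y (khat y))"
  shows "measure_pmf.prob (rr_data eps P0 P1 n kstar)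
           {\<omega>. int \<alpha> < \<bar>int (khat (snd \<circ> \<omega>)) - int kstar\<bar>}
         \<le> 2 * bhattacharyya (bind_pmf P0 (rr_pmf eps)) (bind_pmf P1 (rr_pmf eps)) ^ \<alpha>"
proof -
  define Q0 where "Q0 = bind_pmf P0 (rr_pmf eps)"
  define Q1 where "Q1 = bind_pmf P1 (rr_pmf eps)"
  define llr where "llr z = ln (pmf Q1 z / pmf Q0 z)" for z
  define Y where "Y = Pi_pmf {1..n} (snd (undefined :: 'a \<times> 'a)) (\<lambda>i. if i < kstar then Q0 else Q1)"
  define BC where "BC = bhattacharyya Q0 Q1"
  have pos: "0 < pmf Q0 z" "0 < pmf Q1 z" for z
    by (simp_all add: Q0_def Q1_def pmf_bind_rr_pmf rr_Q_pos)
  have BC: "0 \<le> BC" "BC \<le> 1"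
    by (simp_all add: BC_def bhattacharyya_nonneg bhattacharyya_le_1)
  have outputs: "map_pmf (\<lambda>\<omega>. snd \<circ> \<omega>) (rr_data eps P0 P1 n kstar) = Y"
    unfolding Y_def Q0_def Q1_def by (rule rr_data_outputs)
  have stat: "rr_stat eps P0 P1 n y k = (\<Sum>i=k..n. llr (y i))" for y k
    by (simp add: rr_stat_def llr_def Q0_def Q1_def pmf_bind_rr_pmf)
  have "measure_pmf.prob (rr_data eps P0 P1 n kstar) {\<omega>. int \<alpha> < \<bar>int (khat (snd \<circ> \<omega>)) - int kstar\<bar>}
          = measure_pmf.prob Y {y. int \<alpha> < \<bar>int (khat y) - int kstar\<bar>}"
    unfolding outputs[symmetric] measure_map_pmf by (simp add: vimage_def)
  also have "\<dots> \<le> measure_pmf.prob Y (prefix_prod_event (\<lambda>z. exp (- llr z / 2)) [kstar..<Suc n] \<alpha> 1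
                                 \<union> prefix_prod_event (\<lambda>z. exp (llr z / 2)) (rev [1..<kstar]) \<alpha> 1)"
    using kstar khat_argmax
    by (intro measure_pmf.finite_measure_mono cusum_deviation_subset) (auto simp: stat)
  also have "\<dots> \<le> measure_pmf.prob Y (prefix_prod_event (\<lambda>z. exp (- llr z / 2)) [kstar..<Suc n] \<alpha> 1)
                 + measure_pmf.prob Y (prefix_prod_event (\<lambda>z. exp (llr z / 2)) (rev [1..<kstar]) \<alpha> 1)"
    by (rule measure_subadditive) (simp_all add: measure_pmf.emeasure_eq_measure)
  also have "\<dots> \<le> 1 * BC ^ \<alpha> + 1 * BC ^ \<alpha>"
    unfolding Y_def
  proof (intro add_mono ville_Pi_pmf BC)
    show "(\<Sum>z\<in>UNIV. pmf (if i < kstar then Q0 else Q1) z * exp (- llr z / 2)) \<le> BC"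
      if "i \<in> set [kstar..<Suc n]" for i
      using that bhattacharyya_eq_sum_exp_half_llr(1)[of Q0 Q1] pos by (simp add: BC_def llr_def del: upt_Suc)
    show "(\<Sum>z\<in>UNIV. pmf (if i < kstar then Q0 else Q1) z * exp (llr z / 2)) \<le> BC"
      if "i \<in> set (rev [1..<kstar])" for i
      using that bhattacharyya_eq_sum_exp_half_llr(2)[of Q0 Q1] pos by (simp add: BC_def llr_def)
  qed (use kstar in auto)
  finally show ?thesis
    by (simp add: BC_def Q0_def Q1_def)
qed

theorem corollary5p7:
  fixes P0 P1 :: "'a::finite pmf" and eps :: real and n kstar alpha :: nat
    and khat :: "(nat \<Rightarrow> 'a) \<Rightarrow> nat"
  assumes supp0: "set_pmf P0 = UNIV" and supp1: "set_pmf P1 = UNIV"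
    and neq: "P0 \<noteq> P1"
    and eps: "eps > 0" and n: "n > 1"
    and kstar: "1 < kstar" "kstar \<le> n"
    and alpha: "alpha \<in> {1..n}"
    and khat_argmax: "\<And>y. khat y \<in> {1..n} \<and>
        (\<forall>k\<in>{1..n}. rr_stat eps P0 P1 n y k \<le> rr_stat eps P0 P1 n y (khat y))"
  shows "let q = real CARD('a);
             s = llr_range P0 P1;
             C = 2 * ((exp eps - 1) / (exp eps + q - 1))^2 * (tv_dist P0 P1)^2;
             s_r = min (2 * eps) (tanh (eps / 2) * s);
             t = exp (- real alpha * C^2 / s_r^2);
             M = (n - 1) div alpha
         in measure_pmf.prob (rr_data eps P0 P1 n kstar)
              {\<omega>. \<bar>int (khat (snd \<circ> \<omega>)) - int kstar\<bar> > int alpha}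
            \<le> 2 * min (t * (1 - t ^ M) / (1 - t)) ((1 - C / 2) powr (real alpha / 2))"
proof -
  define x where "x = (exp eps - 1) / (exp eps + real CARD('a) - 1) * tv_dist P0 P1"
  define s_r where "s_r = min (2 * eps) (tanh (eps / 2) * llr_range P0 P1)"
  define t where "t = exp (- real alpha * (2 * x\<^sup>2)\<^sup>2 / s_r\<^sup>2)"
  define Pr where "Pr = measure_pmf.prob (rr_data eps P0 P1 n kstar)
                          {\<omega>. int alpha < \<bar>int (khat (snd \<circ> \<omega>)) - int kstar\<bar>}"
  have Pr_le: "Pr \<le> 2 * (1 - x\<^sup>2) powr (real alpha / 2)"
    using rr_cusum_deviation_prob_le[of kstar n khat eps P0 P1 alpha] kstar khat_argmax
      rr_bhattacharyya_pow_le[of eps P0 P1 alpha] eps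
    by (simp add: Pr_def x_def)
  have main: "Pr \<le> 2 * min (t * (1 - t ^ ((n - 1) div alpha)) / (1 - t)) ((1 - x\<^sup>2) powr (real alpha / 2))"
  proof (cases "alpha = n")
    case True
    then have "\<not> int alpha < \<bar>int (khat y) - int kstar\<bar>" for y
      using khat_argmax[of y] kstar by auto
    then have "Pr = 0"
      by (simp add: Pr_def)
    then show ?thesis
      using True n by simp
  next
    case False
    have "0 < x" "x < 1"
      unfolding x_def using eps neq by (rule rr_gain_tv_dist_bounds)+
    moreover have "4 * x \<le> s_r"
      unfolding x_def s_r_def using supp0 supp1 neq eps by (intro four_rr_tv_dist_le) auto
    ultimately have "(1 - x\<^sup>2) powr (real alpha / 2) \<le> t * (1 - t ^ ((n - 1) div alpha)) / (1 - t)"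
      unfolding t_def using alpha False by (intro powr_le_geometric_sum) (auto simp: Suc_le_eq div_greater_zero_iff)
    then show ?thesis
      using Pr_le by simp
  qed
  have C: "2 * ((exp eps - 1) / (exp eps + real CARD('a) - 1))\<^sup>2 * (tv_dist P0 P1)\<^sup>2 = 2 * x\<^sup>2"
    by (simp only: x_def power_mult_distrib mult.assoc)
  show ?thesis
    using main unfolding Let_def C s_r_def[symmetric] t_def[symmetric] Pr_def[symmetric] by simp
qed

end
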